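(* Let $G$ be a dense $G_\delta$ subset of $2^\omega$, and let $T$ be the tree generated by a test. Then there are $\alpha_0\in G$ and a continuous map $f:2^\omega\to G$ such that for each $\alpha\in 2^\omega$: (a) $(\alpha_0,f(\alpha))\in[T]$; (b) for each $t\in\omega^{<\omega}$ and each $m\in\omega$: (i) if $\alpha(p(tm))=1$, then there is $m'\in\omega$ with $(\alpha_0\,\Delta\,f(\alpha))(p(tm')+1)=1$; (ii) if $(\alpha_0\,\Delta\,f(\alpha))(p(tm)+1)=1$, then there is $m'\in\omega$ with $\alpha(p(tm'))=1$.
   Context: Let $\varphi:\omega\to\omega^2$ be the bijection with inverse $\langle n,p\rangle:=\varphi^{-1}(n,p)=\left(\sum_{k\leq n+p}k\right)+p$, and write $\varphi(q)=((q)_0,(q)_1)$. A set $E\subseteq\bigcup_{q}2^q\times 2^q$ is a test if: (a) for each $q$ there is a unique $(s_q,t_q)\in E\cap(2^q\times 2^q)$; (b) for all $m,p\in\omega$ and $u\in 2^{<\omega}$ there is $v\in 2^{<\omega}$ with $(s_p0uv,t_p1uv)\in E$ and $(|t_p1uv|-1)_0=m$; (c) for each $n>0$ there are $q<n$ and $w\in 2^{<\omega}$ with $s_n=s_q0w$, $t_n=t_q1w$. The tree generated by $E$ is $T:=\{(s,t): s=t=\emptyset$ or $\exists q\ \exists w\in 2^{<\omega}\ (s,t)=(s_q0w,t_q1w)\}$, and $[T]$ is the set of $(\alpha,\beta)\in 2^\omega\times2^\omega$ with $(\alpha\upharpoonright r,\beta\upharpoonright r)\in T$ for all $r$. The map $p:\omega^{<\omega}\setminus\{\emptyset\}\to\omega$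 is defined by $p(s):=s(0)$ if $|s|=1$ and $p(s):=\langle p(s\upharpoonright(|s|-1)),s(|s|-1)\rangle$ otherwise; $tm$ denotes the sequence $t$ followed by $m$. $\alpha\,\Delta\,\beta\in 2^\omega$ is the symmetric difference: $(\alpha\,\Delta\,\beta)(k)=1$ iff $\alpha(k)\neq\beta(k)$. *)

theory Defs
  imports "HOL-Analysis.Analysis"
begin

text \<open>Cantor space 2^omega as nat => bool with the product of discrete topologies
  (False = 0, True = 1).\<close>
definition cantor :: "(nat \<Rightarrow> bool) topology" where
  "cantor = product_topology (\<lambda>_. discrete_topology UNIV) UNIV"

definition npair :: "nat \<Rightarrow> nat \<Rightarrow> nat" where
  "npair n p = (\<Sum>k\<le>n+p. k) + p"

definition phi :: "nat \<Rightarrow> nat \<times> nat" where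
  "phi = inv (\<lambda>(n, p). npair n p)"

definition fst_phi :: "nat \<Rightarrow> nat" where
  "fst_phi q = fst (phi q)"

text \<open>Finite binary sequences are bool lists; 0 = False, 1 = True.
  The unique pair of length q in E.\<close>
definition sE :: "(bool list \<times> bool list) set \<Rightarrow> nat \<Rightarrow> bool list" where
  "sE E q = fst (THE st. st \<in> E \<and> length (fst st) = q \<and> length (snd st) = q)"

definition tE :: "(bool list \<times> bool list) set \<Rightarrow> nat \<Rightarrow> bool list" where
  "tE E q = snd (THE st. st \<in> E \<and> length (fst st) = q \<and> length (snd st) = q)"

definition is_test :: "(bool list \<times> bool list) set \<Rightarrow> bool" where
  "is_test E \<longleftrightarrow>
     (\<forall>st\<in>E. length (fst st) = length (snd st)) \<and>
     (\<forall>q. \<exists>!st. st \<in> E \<and> length (fst st) = q \<and> length (snd st) = q) \<and>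
     (\<forall>m p u. \<exists>v. (sE E p @ [False] @ u @ v, tE E p @ [True] @ u @ v) \<in> E \<and>
                   fst_phi (length (tE E p @ [True] @ u @ v) - 1) = m) \<and>
     (\<forall>n>0. \<exists>q<n. \<exists>w. sE E n = sE E q @ [False] @ w \<and> tE E n = tE E q @ [True] @ w)"

definition tree_of :: "(bool list \<times> bool list) set \<Rightarrow> (bool list \<times> bool list) set" where
  "tree_of E = {(s, t). (s = [] \<and> t = []) \<or>
      (\<exists>q w. s = sE E q @ [False] @ w \<and> t = tE E q @ [True] @ w)}"

definition body :: "(bool list \<times> bool list) set \<Rightarrow> ((nat \<Rightarrow> bool) \<times> (nat \<Rightarrow> bool)) set" where
  "body T = {(a, b). \<forall>r. (map a [0..<r], map b [0..<r]) \<in> T}"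

text \<open>p(s) for nonempty s: p([a]) = a, p(s a) = <p(s), a>.\<close>
fun pcode :: "nat list \<Rightarrow> nat" where
  "pcode [] = undefined"
| "pcode (x # xs) = foldl (\<lambda>acc a. npair acc a) x xs"

definition symdiff :: "(nat \<Rightarrow> bool) \<Rightarrow> (nat \<Rightarrow> bool) \<Rightarrow> nat \<Rightarrow> bool" where
  "symdiff a b k = (a k \<noteq> b k)"

end

theory Submission
  imports Defs "HOL-Library.Nat_Bijection" "HOL-Library.Sublist"
begin

text \<open>
  Write \<open>G = \<Inter>\<^sub>j U\<^sub>j\<close> with \<open>U\<^sub>j\<close> dense open. The point \<open>\<alpha>\<^sub>0\<close> is the limit of finite prefixes
  \<open>\<sigma>\<^sub>j\<close>, and \<open>f \<alpha>\<close> is \<open>\<alpha>\<^sub>0\<close> with the bits in a set \<open>Q(\<alpha>) \<ni> 0\<close> flipped, so that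
  \<open>\<alpha>\<^sub>0 \<Delta> f \<alpha>\<close> is the indicator of \<open>Q(\<alpha>)\<close>. At stage \<open>j\<close> the prefix is first extended so
  that every flip of it has its cylinder inside \<open>U\<^sub>j\<close>, which puts \<open>\<alpha>\<^sub>0\<close> and all \<open>f \<alpha>\<close> into \<open>G\<close>.
  Then, for the \<open>j\<close>-th finite list \<open>\<tau>\<close>, if it ends in a \<open>1\<close> at position \<open>k\<close>, clause (b) of the
  test extends the prefix to a test node \<open>(s\<^sub>q0, t\<^sub>q1)\<close> with \<open>(q - 1)\<^sub>0 = k\<^sub>0\<close>, and \<open>q\<close> is put
  into \<open>Q(\<alpha>)\<close> for exactly the \<open>\<alpha>\<close> extending \<open>\<tau>\<close>.

  Every \<open>q \<in> Q(\<alpha>)\<close> is then a node of the test through which \<open>(\<alpha>\<^sub>0, f \<alpha>)\<close> passes, so this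
  pair is a branch of \<open>T\<close>; bit \<open>i\<close> of \<open>f \<alpha>\<close> depends only on finitely many bits of \<open>\<alpha>\<close>, so \<open>f\<close>
  is continuous; each \<open>1\<close> of \<open>\<alpha>\<close> at a position \<open>k\<close> yields some \<open>q \<in> Q(\<alpha>)\<close> with
  \<open>(q - 1)\<^sub>0 = k\<^sub>0\<close>, and every nonzero \<open>q \<in> Q(\<alpha>)\<close> arises in this way. Since the codes
  \<open>p(tm)\<close>, \<open>m \<in> \<omega>\<close>, fill the whole fibre of \<open>(\<cdot>)\<^sub>0\<close> over \<open>p(t)\<close> (for \<open>t \<noteq> []\<close>), this gives (i)
  and (ii).
\<close>

section \<open>Cylinders in Cantor space\<close>

lemma topspace_cantor [simp]: "topspace cantor = UNIV"
  by (simp add: cantor_def)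

definition cylinder :: "bool list \<Rightarrow> (nat \<Rightarrow> bool) set" where
  "cylinder \<tau> = {\<alpha>. \<forall>i<length \<tau>. \<alpha> i = \<tau> ! i}"

lemma mem_cylinder_iff_map: "\<alpha> \<in> cylinder \<tau> \<longleftrightarrow> map \<alpha> [0..<length \<tau>] = \<tau>"
proof
  assume map: "map \<alpha> [0..<length \<tau>] = \<tau>"
  have "\<alpha> i = \<tau> ! i" if "i < length \<tau>" for i
    using that arg_cong[OF map, of "\<lambda>xs. xs ! i"] by simp
  then show "\<alpha> \<in> cylinder \<tau>" by (simp add: cylinder_def)
qed (auto simp: cylinder_def intro!: nth_equalityI)

lemma mem_cylinder_map_iff: "\<beta> \<in> cylinder (map \<alpha> [0..<n]) \<longleftrightarrow> (\<forall>i<n. \<beta> i = \<alpha> i)"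
  by (simp add: cylinder_def)

lemma mem_cylinder_map [simp]: "\<alpha> \<in> cylinder (map \<alpha> [0..<n])"
  by (simp add: mem_cylinder_map_iff)

lemma cylinder_antimono: "prefix \<sigma> \<tau> \<Longrightarrow> cylinder \<tau> \<subseteq> cylinder \<sigma>"
  by (auto simp: cylinder_def prefix_def nth_append)

lemma prefix_nth: "prefix xs ys \<Longrightarrow> i < length xs \<Longrightarrow> ys ! i = xs ! i"
  by (auto simp: prefix_def nth_append)

definition pad :: "bool list \<Rightarrow> nat \<Rightarrow> bool" where
  "pad \<tau> i \<longleftrightarrow> i < length \<tau> \<and> \<tau> ! i"

lemma pad_in_cylinder: "pad \<tau> \<in> cylinder \<tau>"
  by (simp add: pad_def cylinder_def)

lemma openin_cantor_cylinder: "openin cantor (cylinder \<tau>)"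
proof -
  define V where "V i = (if i < length \<tau> then {\<tau> ! i} else UNIV)" for i
  have "cylinder \<tau> = Pi\<^sub>E UNIV V"
    by (auto simp: cylinder_def V_def PiE_iff split: if_splits)
  moreover have "finite {i. V i \<noteq> UNIV}"
    by (rule finite_subset[of _ "{..<length \<tau>}"]) (auto simp: V_def)
  ultimately show ?thesis
    unfolding cantor_def openin_product_topology_alt by auto
qed

lemma openin_cantor_imp_cylinder:
  assumes "openin cantor V" "\<alpha> \<in> V"
  obtains n where "cylinder (map \<alpha> [0..<n]) \<subseteq> V"
proof -
  have "\<exists>W. finite {i \<in> UNIV. W i \<noteq> topspace (discrete_topology UNIV)} \<and>
      (\<forall>i\<in>UNIV. openin (discrete_topology UNIV) (W i)) \<and> \<alpha> \<in> Pi\<^sub>E UNIV W \<and> Pi\<^sub>E UNIV W \<subseteq> V"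
    using assms unfolding cantor_def openin_product_topology_alt by blast
  then obtain W where W: "finite {i. W i \<noteq> UNIV}" "\<alpha> \<in> Pi\<^sub>E UNIV W" "Pi\<^sub>E UNIV W \<subseteq> V"
    by auto
  define n where "n = Suc (Max {i. W i \<noteq> UNIV})"
  have "cylinder (map \<alpha> [0..<n]) \<subseteq> Pi\<^sub>E UNIV W"
  proof
    fix \<beta> assume \<beta>: "\<beta> \<in> cylinder (map \<alpha> [0..<n])"
    have "\<beta> i \<in> W i" for i
    proof (cases "W i = UNIV")
      case False
      then have "i < n"
        using Max_ge[OF W(1), of i] False by (simp add: n_def less_Suc_eq_le)
      then have "\<beta> i = \<alpha> i"
        using \<beta> by (simp add: mem_cylinder_map_iff)
      moreover have "\<alpha> i \<in> W i"
        using W(2) by (simp add: PiE_iff)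
      ultimately show ?thesis by simp
    qed simp
    then show "\<beta> \<in> Pi\<^sub>E UNIV W" by (simp add: PiE_iff)
  qed
  from subset_trans[OF this W(3)] show thesis by (rule that)
qed

lemma continuous_map_cantor_discrete_if_finitely_determined:
  assumes "\<And>\<alpha> \<beta>. \<forall>k<n. \<alpha> k = \<beta> k \<Longrightarrow> g \<alpha> = g \<beta>"
  shows "continuous_map cantor (discrete_topology UNIV) g"
  unfolding continuous_map_def
proof (intro conjI allI impI)
  fix S
  have "\<exists>T. openin cantor T \<and> \<alpha> \<in> T \<and> T \<subseteq> {\<beta>. g \<beta> \<in> S}" if "g \<alpha> \<in> S" for \<alpha>
  proof (intro exI conjI)
    show "cylinder (map \<alpha> [0..<n]) \<subseteq> {\<beta>. g \<beta> \<in> S}"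
    proof
      fix \<beta> assume "\<beta> \<in> cylinder (map \<alpha> [0..<n])"
      then have "g \<beta> = g \<alpha>" by (intro assms) (simp add: mem_cylinder_map_iff)
      with that show "\<beta> \<in> {\<beta>. g \<beta> \<in> S}" by simp
    qed
  qed (simp_all add: openin_cantor_cylinder)
  then show "openin cantor {\<alpha> \<in> topspace cantor. g \<alpha> \<in> S}"
    by (subst openin_subopen) simp
qed simp

lemma dense_open_extends_cylinder:
  assumes "openin cantor V" "cantor closure_of V = topspace cantor"
  obtains u where "cylinder (r @ u) \<subseteq> V"
proof -
  have "pad r \<in> cantor closure_of V" using assms(2) by simp
  then obtain \<alpha> where \<alpha>: "\<alpha> \<in> V" "\<alpha> \<in> cylinder r"
    using openin_cantor_cylinder[of r] pad_in_cylinder[of r] unfolding in_closure_of by blast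
  obtain n where n: "cylinder (map \<alpha> [0..<n]) \<subseteq> V"
    using openin_cantor_imp_cylinder[OF assms(1) \<alpha>(1)] .
  define m where "m = max n (length r)"
  have split: "map \<alpha> [0..<m] = r @ map \<alpha> [length r..<m]"
    using \<alpha>(2) upt_add_eq_append[of 0 "length r" "m - length r"]
    by (simp add: mem_cylinder_iff_map m_def)
  have "prefix (map \<alpha> [0..<n]) (map \<alpha> [0..<m])"
    using take_is_prefix[of n "map \<alpha> [0..<m]"] by (simp add: take_map m_def)
  then have "cylinder (r @ map \<alpha> [length r..<m]) \<subseteq> V"
    using n cylinder_antimono split by fastforce
  then show thesis by (rule that)
qed

lemma dense_open_extends_cylinders:
  assumes "openin cantor V" "cantor closure_of V = topspace cantor" "finite S"
  obtains u where "u \<noteq> []" "\<And>r. r \<in> S \<Longrightarrow> cylinder (r @ u) \<subseteq> V"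
  using assms(3) that
proof (induction S arbitrary: thesis rule: finite_induct)
  case empty
  then show ?case by (metis empty_iff list.distinct(1))
next
  case (insert r S)
  obtain u where u: "u \<noteq> []" "\<And>r'. r' \<in> S \<Longrightarrow> cylinder (r' @ u) \<subseteq> V"
    using insert.IH by blast
  obtain u' where u': "cylinder (r @ u @ u') \<subseteq> V"
    using dense_open_extends_cylinder[OF assms(1,2), of "r @ u"] by auto
  have S_ext: "cylinder (r' @ u @ u') \<subseteq> V" if "r' \<in> S" for r'
    using u(2)[OF that] cylinder_antimono[of "r' @ u" "r' @ u @ u'"] by auto
  show ?case
    by (rule insert.prems[of "u @ u'"]) (use u(1) u' S_ext in auto)
qed

lemma mem_cylinder_cong:
  "(\<And>i. i < n \<Longrightarrow> \<alpha> i = \<beta> i) \<Longrightarrow> length \<tau> \<le> n \<Longrightarrow> \<alpha> \<in> cylinder \<tau> \<longleftrightarrow> \<beta> \<in> cylinder \<tau>"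
  by (auto simp: cylinder_def)

section \<open>Flipping bits and passing through test nodes\<close>

definition flip :: "bool list \<Rightarrow> nat set \<Rightarrow> bool list" where
  "flip \<sigma> Q = map (\<lambda>i. \<sigma> ! i \<noteq> (i \<in> Q)) [0..<length \<sigma>]"

definition flip_seq :: "(nat \<Rightarrow> bool) \<Rightarrow> nat set \<Rightarrow> nat \<Rightarrow> bool" where
  "flip_seq \<alpha> Q i \<longleftrightarrow> \<alpha> i \<noteq> (i \<in> Q)"

lemma length_flip [simp]: "length (flip \<sigma> Q) = length \<sigma>"
  by (simp add: flip_def)

lemma nth_flip [simp]: "i < length \<sigma> \<Longrightarrow> flip \<sigma> Q ! i \<longleftrightarrow> \<sigma> ! i \<noteq> (i \<in> Q)"
  by (simp add: flip_def)

lemma flip_Nil [simp]: "flip [] Q = []"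
  by (simp add: flip_def)

lemma flip_cong: "(\<And>i. i < length \<sigma> \<Longrightarrow> i \<in> Q \<longleftrightarrow> i \<in> Q') \<Longrightarrow> flip \<sigma> Q = flip \<sigma> Q'"
  by (rule nth_equalityI) simp_all

lemma flip_snoc: "flip (\<sigma> @ [b]) Q = flip \<sigma> Q @ [b \<noteq> (length \<sigma> \<in> Q)]"
  by (rule nth_equalityI) (auto simp: nth_append less_Suc_eq)

lemma flip_append: "Q \<subseteq> {..<length \<sigma>} \<Longrightarrow> flip (\<sigma> @ \<tau>) Q = flip \<sigma> Q @ \<tau>"
  by (rule nth_equalityI) (auto simp: nth_append)

lemma take_flip: "take n (flip \<sigma> Q) = flip (take n \<sigma>) Q"
  by (rule nth_equalityI) simp_all

lemma drop_flip: "(\<And>q. q \<in> Q \<Longrightarrow> q < n \<or> length \<sigma> \<le> q) \<Longrightarrow> drop n (flip \<sigma> Q) = drop n \<sigma>"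
  by (rule nth_equalityI) fastforce+

lemma map_flip_seq: "map (flip_seq \<alpha> Q) [0..<n] = flip (map \<alpha> [0..<n]) Q"
  by (rule nth_equalityI) (simp_all add: flip_seq_def)

lemma flip_seq_empty [simp]: "flip_seq \<alpha> {} = \<alpha>"
  by (simp add: flip_seq_def fun_eq_iff)

lemma symdiff_flip_seq: "symdiff \<alpha> (flip_seq \<alpha> Q) i \<longleftrightarrow> i \<in> Q"
  by (auto simp: symdiff_def flip_seq_def)

text \<open>The pair \<open>(\<sigma>, flip \<sigma> Q)\<close> passes through the node \<open>(s\<^sub>q0, t\<^sub>q1)\<close> of the
  test at every \<open>q \<in> Q\<close>.\<close>
definition meets_test :: "(bool list \<times> bool list) set \<Rightarrow> bool list \<Rightarrow> nat set \<Rightarrow> bool" where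
  "meets_test E \<sigma> Q \<longleftrightarrow> (\<forall>q\<in>Q. take (Suc q) \<sigma> = sE E q @ [False] \<and> flip (sE E q) Q = tE E q)"

definition meets_test_seq :: "(bool list \<times> bool list) set \<Rightarrow> (nat \<Rightarrow> bool) \<Rightarrow> nat set \<Rightarrow> bool" where
  "meets_test_seq E \<alpha> Q \<longleftrightarrow> (\<forall>q\<in>Q. \<alpha> \<in> cylinder (sE E q @ [False]) \<and> flip (sE E q) Q = tE E q)"

context
  fixes E :: "(bool list \<times> bool list) set"
  assumes test: "is_test E"
begin

lemma length_sE [simp]: "length (sE E q) = q"
  and length_tE [simp]: "length (tE E q) = q"
proof -
  have "\<exists>!st. st \<in> E \<and> length (fst st) = q \<and> length (snd st) = q"
    using test by (simp add: is_test_def)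
  from theI'[OF this] show "length (sE E q) = q" "length (tE E q) = q"
    by (simp_all add: sE_def tE_def)
qed

lemma test_pair_unique:
  assumes "(s, t) \<in> E"
  shows "sE E (length s) = s" "tE E (length s) = t"
proof -
  have "length t = length s"
    using test assms by (auto simp: is_test_def)
  moreover have "\<exists>!st. st \<in> E \<and> length (fst st) = length s \<and> length (snd st) = length s"
    using test by (simp add: is_test_def)
  ultimately have "(THE st. st \<in> E \<and> length (fst st) = length s \<and> length (snd st) = length s) = (s, t)"
    using assms by (intro the1_equality) simp_all
  then show "sE E (length s) = s" "tE E (length s) = t"
    by (simp_all add: sE_def tE_def)
qed

lemma meets_test_bound:
  assumes "meets_test E \<sigma> Q"
  shows "Q \<subseteq> {..<length \<sigma>}"
proof
  fix q assume "q \<in> Q"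
  then have "length (take (Suc q) \<sigma>) = Suc q"
    using assms by (simp add: meets_test_def)
  then show "q \<in> {..<length \<sigma>}" by simp
qed

lemma meets_test_append: "meets_test E \<sigma> Q \<Longrightarrow> meets_test E (\<sigma> @ \<tau>) Q"
  using meets_test_bound unfolding meets_test_def by fastforce

lemma meets_test_insert:
  assumes meets: "meets_test E \<sigma> Q" and node: "(\<sigma> @ v, flip \<sigma> Q @ v) \<in> E"
  shows "meets_test E (\<sigma> @ v @ [False]) (insert (length \<sigma> + length v) Q)"
proof -
  define n where "n = length \<sigma> + length v"
  have bound: "Q \<subseteq> {..<length \<sigma>}" using meets_test_bound[OF meets] .
  have same_flip: "flip \<rho> (insert n Q) = flip \<rho> Q" if "length \<rho> \<le> n" for \<rho>
    using that by (intro flip_cong) auto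
  have new: "sE E n = \<sigma> @ v" "tE E n = flip \<sigma> Q @ v"
    using test_pair_unique[OF node] by (simp_all add: n_def)
  have "take (Suc n) (\<sigma> @ v @ [False]) = sE E n @ [False]"
    using new by (simp add: n_def)
  moreover have "flip (sE E n) (insert n Q) = flip (\<sigma> @ v) Q"
    using new same_flip[of "\<sigma> @ v"] by (simp add: n_def)
  moreover have "flip (\<sigma> @ v) Q = tE E n"
    using new bound by (simp add: flip_append)
  moreover have "take (Suc q) (\<sigma> @ v @ [False]) = sE E q @ [False] \<and> flip (sE E q) (insert n Q) = tE E q"
    if "q \<in> Q" for q
  proof -
    have "q < n" using that bound by (auto simp: n_def)
    then show ?thesis
      using meets_test_append[OF meets, of "v @ [False]"] that same_flip[of "sE E q"]
      by (simp add: meets_test_def)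
  qed
  ultimately show ?thesis
    unfolding meets_test_def n_def[symmetric] by auto
qed

lemma flip_through_test_node:
  assumes "take (Suc p) \<sigma> = sE E p @ [False]" "flip (sE E p) Q = tE E p" "p \<in> Q"
    and "\<And>q. q \<in> Q \<Longrightarrow> q < length \<sigma> \<Longrightarrow> q \<le> p"
  shows "\<sigma> = sE E p @ False # drop (Suc p) \<sigma>" "flip \<sigma> Q = tE E p @ True # drop (Suc p) \<sigma>"
proof -
  show "\<sigma> = sE E p @ False # drop (Suc p) \<sigma>"
    using append_take_drop_id[of "Suc p" \<sigma>] assms(1) by simp
  have "drop (Suc p) (flip \<sigma> Q) = drop (Suc p) \<sigma>"
    using assms(4) by (intro drop_flip) (meson not_less not_less_eq_eq)
  moreover have "take (Suc p) (flip \<sigma> Q) = tE E p @ [True]"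
    using assms(1-3) by (simp add: take_flip flip_snoc)
  ultimately show "flip \<sigma> Q = tE E p @ True # drop (Suc p) \<sigma>"
    using append_take_drop_id[of "Suc p" "flip \<sigma> Q"] by simp
qed

lemma meets_test_extension:
  assumes "meets_test E \<sigma> Q" "finite Q" "0 \<in> Q"
  obtains v where "(\<sigma> @ v, flip \<sigma> Q @ v) \<in> E" "fst_phi (length \<sigma> + length v - 1) = m"
proof -
  define p where "p = Max Q"
  have "p \<in> Q" using assms(2,3) unfolding p_def by (intro Max_in) auto
  moreover have "\<And>q. q \<in> Q \<Longrightarrow> q \<le> p" using assms(2) by (simp add: p_def)
  ultimately have split: "\<sigma> = sE E p @ False # drop (Suc p) \<sigma>"
    "flip \<sigma> Q = tE E p @ True # drop (Suc p) \<sigma>"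
    using assms(1) by (auto simp: meets_test_def intro!: flip_through_test_node)
  obtain v where "(sE E p @ [False] @ drop (Suc p) \<sigma> @ v, tE E p @ [True] @ drop (Suc p) \<sigma> @ v) \<in> E"
    "fst_phi (length (tE E p @ [True] @ drop (Suc p) \<sigma> @ v) - 1) = m"
    using test unfolding is_test_def by blast
  then show thesis
    using split that[of v] by (metis append_Cons append_Nil append_assoc length_append length_flip)
qed

lemma meets_test_seq_body:
  assumes "meets_test_seq E \<alpha> Q" "0 \<in> Q"
  shows "(\<alpha>, flip_seq \<alpha> Q) \<in> body (tree_of E)"
  unfolding body_def
proof (clarify)
  fix r
  show "(map \<alpha> [0..<r], map (flip_seq \<alpha> Q) [0..<r]) \<in> tree_of E"
  proof (cases "r = 0")
    case False
    define p where "p = Max (Q \<inter> {..<r})"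
    have "p \<in> Q \<inter> {..<r}"
      unfolding p_def using assms(2) False by (intro Max_in) auto
    then have p: "p \<in> Q" "p < r" "\<And>q. q \<in> Q \<Longrightarrow> q < r \<Longrightarrow> q \<le> p"
      by (auto simp: p_def)
    have "take (Suc p) (map \<alpha> [0..<r]) = sE E p @ [False]"
      using assms(1) p(1,2) by (simp add: meets_test_seq_def mem_cylinder_iff_map take_map)
    then have "map \<alpha> [0..<r] = sE E p @ [False] @ drop (Suc p) (map \<alpha> [0..<r])"
      "flip (map \<alpha> [0..<r]) Q = tE E p @ [True] @ drop (Suc p) (map \<alpha> [0..<r])"
      using assms(1) p flip_through_test_node[of p "map \<alpha> [0..<r]" Q]
      by (simp_all add: meets_test_seq_def)
    then show ?thesis
      unfolding tree_of_def map_flip_seq by blast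
  qed (simp add: tree_of_def)
qed

end

section \<open>The pairing function and the codes \<open>p(t)\<close>\<close>

lemma npair_eq_prod_encode: "npair n p = prod_encode (p, n)"
proof -
  have "(\<Sum>k\<le>n + p. k) = triangle (n + p)"
    by (simp add: atLeast0AtMost[symmetric] gauss_sum_nat triangle_def)
  then show ?thesis by (simp add: npair_def prod_encode_def add.commute)
qed

lemma bij_npair: "bij (\<lambda>(n, p). npair n p)"
proof -
  have "(\<lambda>(n, p). npair n p) = prod_encode \<circ> prod.swap"
    by (auto simp: npair_eq_prod_encode)
  then show ?thesis
    using bij_prod_encode bij_swap bij_comp by metis
qed

lemma fst_phi_npair [simp]: "fst_phi (npair n p) = n"
  using bij_is_inj[OF bij_npair] inv_f_f[of "\<lambda>(n, p). npair n p" "(n, p)"]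
  by (simp add: fst_phi_def phi_def)

lemma npair_phi: "npair (fst (phi k)) (snd (phi k)) = k"
  using surj_f_inv_f[OF bij_is_surj[OF bij_npair], of k]
  by (simp add: phi_def case_prod_beta)

lemma pcode_snoc: "pcode (t @ [m]) = (if t = [] then m else npair (pcode t) m)"
  by (cases t) auto

lemma pcode_snoc_fibre:
  assumes "fst_phi k = fst_phi (pcode (t @ [m]))"
  obtains m' where "pcode (t @ [m']) = k"
proof (cases "t = []")
  case True
  then show thesis using that[of k] by (simp add: pcode_snoc)
next
  case False
  then have "fst (phi k) = pcode t"
    using assms by (simp add: pcode_snoc fst_phi_def[symmetric])
  then show thesis
    using that[of "snd (phi k)"] npair_phi[of k] False by (simp add: pcode_snoc)
qed

section \<open>Enumerating finite binary lists\<close>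

text \<open>\<open>enum_bits (j + 1)\<close> is the binary expansion of \<open>j + 1\<close> without its leading \<open>1\<close>,
  so lists are enumerated in order of nondecreasing length.\<close>
fun enum_bits :: "nat \<Rightarrow> bool list" where
  "enum_bits 0 = []"
| "enum_bits (Suc j) = enum_bits (j div 2) @ [odd j]"

lemma length_enum_bits_mono: "j \<le> k \<Longrightarrow> length (enum_bits j) \<le> length (enum_bits k)"
proof (induction k arbitrary: j rule: less_induct)
  case (less k)
  show ?case
  proof (cases j)
    case (Suc j')
    then obtain k' where k: "k = Suc k'" using less.prems by (cases k) auto
    have "j' div 2 \<le> k' div 2" "k' div 2 < k"
      using less.prems Suc k by (simp_all add: div_le_mono)
    then have "length (enum_bits (j' div 2)) \<le> length (enum_bits (k' div 2))"
      by (rule less.IH[rotated])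
    then show ?thesis using Suc k by simp
  qed simp
qed

lemma enum_bits_surj: "\<exists>j. enum_bits j = \<tau>"
proof (induction \<tau> rule: rev_induct)
  case Nil
  show ?case by (rule exI[of _ 0]) simp
next
  case (snoc b \<tau>)
  then obtain j where "enum_bits j = \<tau>" by blast
  then have "enum_bits (Suc (2 * j + of_bool b)) = \<tau> @ [b]" by simp
  then show ?case by blast
qed

definition ends_True :: "bool list \<Rightarrow> bool" where
  "ends_True \<tau> \<longleftrightarrow> \<tau> \<noteq> [] \<and> last \<tau>"

lemma ends_True_cylinder: "ends_True \<tau> \<Longrightarrow> \<alpha> \<in> cylinder \<tau> \<Longrightarrow> \<alpha> (length \<tau> - 1)"
  by (auto simp: ends_True_def cylinder_def last_conv_nth)

locale test_construction =
  fixes E :: "(bool list \<times> bool list) set" and U :: "nat \<Rightarrow> (nat \<Rightarrow> bool) set"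
  assumes test: "is_test E"
    and open_U: "\<And>j. openin cantor (U j)"
    and dense_U: "\<And>j. cantor closure_of U j = topspace cantor"
begin

definition dense_ext :: "nat \<Rightarrow> bool list \<Rightarrow> bool list" where
  "dense_ext j \<sigma> = (SOME u. u \<noteq> [] \<and> (\<forall>Q \<subseteq> {..<length \<sigma>}. cylinder (flip \<sigma> Q @ u) \<subseteq> U j))"

lemma dense_ext:
  "dense_ext j \<sigma> \<noteq> []" "Q \<subseteq> {..<length \<sigma>} \<Longrightarrow> cylinder (flip \<sigma> Q @ dense_ext j \<sigma>) \<subseteq> U j"
proof -
  obtain u where "u \<noteq> []" "\<And>r. r \<in> flip \<sigma> ` Pow {..<length \<sigma>} \<Longrightarrow> cylinder (r @ u) \<subseteq> U j"
    using dense_open_extends_cylinders[OF open_U dense_U, of "flip \<sigma> ` Pow {..<length \<sigma>}"] by blast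
  then have "\<exists>u. u \<noteq> [] \<and> (\<forall>Q \<subseteq> {..<length \<sigma>}. cylinder (flip \<sigma> Q @ u) \<subseteq> U j)"
    by blast
  from someI_ex[OF this] show "dense_ext j \<sigma> \<noteq> []"
    "Q \<subseteq> {..<length \<sigma>} \<Longrightarrow> cylinder (flip \<sigma> Q @ dense_ext j \<sigma>) \<subseteq> U j"
    unfolding dense_ext_def by blast+
qed

definition flipset :: "(bool list \<times> nat) list \<Rightarrow> (nat \<Rightarrow> bool) \<Rightarrow> nat set" where
  "flipset evs \<alpha> = insert 0 {q. \<exists>\<tau>. (\<tau>, q) \<in> set evs \<and> \<alpha> \<in> cylinder \<tau>}"

lemma finite_flipset: "finite (flipset evs \<alpha>)"
proof -
  have "{q. \<exists>\<tau>. (\<tau>, q) \<in> set evs \<and> \<alpha> \<in> cylinder \<tau>} \<subseteq> snd ` set evs"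
    by force
  then show ?thesis
    unfolding flipset_def by (meson finite_imageI finite_insert finite_set finite_subset)
qed

lemma zero_in_flipset [simp]: "0 \<in> flipset evs \<alpha>"
  by (simp add: flipset_def)

lemma flipset_Nil [simp]: "flipset [] \<alpha> = {0}"
  by (simp add: flipset_def)

definition witness :: "nat \<Rightarrow> bool list \<Rightarrow> nat set \<Rightarrow> bool list" where
  "witness m \<sigma> Q = (SOME v. (\<sigma> @ v, flip \<sigma> Q @ v) \<in> E \<and> fst_phi (length \<sigma> + length v - 1) = m)"

lemma witness:
  assumes "meets_test E \<sigma> Q" "finite Q" "0 \<in> Q"
  shows "(\<sigma> @ witness m \<sigma> Q, flip \<sigma> Q @ witness m \<sigma> Q) \<in> E"
    "fst_phi (length \<sigma> + length (witness m \<sigma> Q) - 1) = m"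
proof -
  obtain v where "(\<sigma> @ v, flip \<sigma> Q @ v) \<in> E" "fst_phi (length \<sigma> + length v - 1) = m"
    using meets_test_extension[OF test assms] .
  then have "\<exists>v. (\<sigma> @ v, flip \<sigma> Q @ v) \<in> E \<and> fst_phi (length \<sigma> + length v - 1) = m"
    by blast
  from someI_ex[OF this] show "(\<sigma> @ witness m \<sigma> Q, flip \<sigma> Q @ witness m \<sigma> Q) \<in> E"
    "fst_phi (length \<sigma> + length (witness m \<sigma> Q) - 1) = m"
    unfolding witness_def by blast+
qed

text \<open>If the \<open>j\<close>-th list \<open>\<tau>\<close> ends in \<open>1\<close>, it then appends the extension given
  by clause (b) of the test for the flip set determined by \<open>\<tau>\<close> (the same for every \<open>\<alpha>\<close> extending \<open>\<tau>\<close>, since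
  earlier lists are not longer than \<open>\<tau>\<close>), reaching a test node at a position \<open>q\<close> with
  \<open>(q - 1)\<^sub>0 = (|\<tau>| - 1)\<^sub>0\<close>, and records the event \<open>(\<tau>, q)\<close>: bit \<open>q\<close> is flipped exactly
  for the \<open>\<alpha>\<close> extending \<open>\<tau>\<close>.\<close>
definition step :: "nat \<Rightarrow> bool list \<times> (bool list \<times> nat) list \<Rightarrow> bool list \<times> (bool list \<times> nat) list" where
  "step j = (\<lambda>(\<sigma>, evs). let \<sigma>' = \<sigma> @ dense_ext j \<sigma>; \<tau> = enum_bits j in
     if ends_True \<tau> then
       let v = witness (fst_phi (length \<tau> - 1)) \<sigma>' (flipset evs (pad \<tau>))
       in (\<sigma>' @ v @ [False], evs @ [(\<tau>, length \<sigma>' + length v)])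
     else (\<sigma>', evs))"

primrec stage :: "nat \<Rightarrow> bool list \<times> (bool list \<times> nat) list" where
  "stage 0 = ([False], [])"
| "stage (Suc j) = step j (stage j)"

definition sig :: "nat \<Rightarrow> bool list" where "sig j = fst (stage j)"
definition events :: "nat \<Rightarrow> (bool list \<times> nat) list" where "events j = snd (stage j)"
definition sig_ext :: "nat \<Rightarrow> bool list" where "sig_ext j = sig j @ dense_ext j (sig j)"
definition wit :: "nat \<Rightarrow> bool list" where
  "wit j = witness (fst_phi (length (enum_bits j) - 1)) (sig_ext j) (flipset (events j) (pad (enum_bits j)))"
definition node :: "nat \<Rightarrow> nat" where "node j = length (sig_ext j) + length (wit j)"

lemma stage_0: "sig 0 = [False]" "events 0 = []"
  by (simp_all add: sig_def events_def)

lemma stage_Suc: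
  "sig (Suc j) = (if ends_True (enum_bits j) then sig_ext j @ wit j @ [False] else sig_ext j)"
  "events (Suc j) = (if ends_True (enum_bits j) then events j @ [(enum_bits j, node j)] else events j)"
  by (simp_all add: sig_def events_def sig_ext_def wit_def node_def step_def Let_def case_prod_beta)

lemma set_events: "set (events j) = (\<lambda>l. (enum_bits l, node l)) ` {l \<in> {..<j}. ends_True (enum_bits l)}"
proof (induction j)
  case (Suc j)
  then show ?case by (auto simp: stage_Suc lessThan_Suc)
qed (simp add: stage_0)

lemma flipset_events:
  "flipset (events j) \<alpha> = insert 0 (node ` {l \<in> {..<j}. ends_True (enum_bits l) \<and> \<alpha> \<in> cylinder (enum_bits l)})"
  unfolding flipset_def set_events by blast

lemma flipset_events_Suc:
  "flipset (events (Suc j)) \<alpha> = (if ends_True (enum_bits j) \<and> \<alpha> \<in> cylinder (enum_bits j)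
     then insert (node j) (flipset (events j) \<alpha>) else flipset (events j) \<alpha>)"
  unfolding flipset_events lessThan_Suc by auto

lemma flipset_events_cong:
  assumes "\<And>i. i < length (enum_bits j) \<Longrightarrow> \<alpha> i = \<beta> i"
  shows "flipset (events j) \<alpha> = flipset (events j) \<beta>"
proof -
  have "\<alpha> \<in> cylinder (enum_bits l) \<longleftrightarrow> \<beta> \<in> cylinder (enum_bits l)" if "l < j" for l
    using assms length_enum_bits_mono[of l j] that by (intro mem_cylinder_cong) auto
  then show ?thesis
    unfolding flipset_events by blast
qed

lemma prefix_sig_ext: "prefix (sig j) (sig_ext j)" "prefix (sig_ext j) (sig (Suc j))"
  by (simp_all add: sig_ext_def stage_Suc)

lemma length_sig_less_sig_ext: "length (sig j) < length (sig_ext j)"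
  using dense_ext(1) by (simp add: sig_ext_def)

lemma prefix_sig_mono: "j \<le> k \<Longrightarrow> prefix (sig j) (sig k)"
proof (induction k rule: dec_induct)
  case (step k)
  then show ?case
    using prefix_sig_ext[of k] prefix_order.trans by blast
qed simp

lemma length_sig_ext_mono:
  assumes "j \<le> k"
  shows "length (sig_ext j) \<le> length (sig_ext k)"
proof (cases "j = k")
  case False
  then have "prefix (sig_ext j) (sig_ext k)"
    using assms prefix_sig_ext[of j] prefix_sig_ext[of k] prefix_sig_mono[of "Suc j" k]
    by (meson Suc_leI le_neq_implies_less prefix_order.trans)
  then show ?thesis by (rule prefix_length_le)
qed simp

lemma less_length_sig: "j < length (sig j)"
proof (induction j)
  case (Suc j)
  then show ?case
    using length_sig_less_sig_ext[of j] prefix_length_le[OF prefix_sig_ext(2)[of j]] by linarith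
qed (simp add: stage_0)

lemma length_sig_ext_le_node: "length (sig_ext l) \<le> node l"
  by (simp add: node_def)

lemma node_gt: "l < node l"
  using less_length_sig[of l] length_sig_less_sig_ext[of l] length_sig_ext_le_node[of l] by linarith

lemma meets_test_stage_Suc:
  assumes IH: "\<And>\<beta>. meets_test E (sig j) (flipset (events j) \<beta>)"
  shows "meets_test E (sig (Suc j)) (flipset (events (Suc j)) \<alpha>)"
proof (cases "ends_True (enum_bits j)")
  case False
  then show ?thesis
    using meets_test_append[OF test IH] by (simp add: stage_Suc(1) flipset_events_Suc sig_ext_def)
next
  case True
  have ext: "meets_test E (sig_ext j) (flipset (events j) \<beta>)" for \<beta>
    using meets_test_append[OF test IH] by (simp add: sig_ext_def)
  show ?thesis
  proof (cases "\<alpha> \<in> cylinder (enum_bits j)")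
    case False
    then show ?thesis
      using True meets_test_append[OF test ext] by (simp add: stage_Suc(1) flipset_events_Suc)
  next
    case in_cyl: True
    have "flipset (events j) \<alpha> = flipset (events j) (pad (enum_bits j))"
      using in_cyl pad_in_cylinder[of "enum_bits j"]
      by (intro flipset_events_cong) (simp add: cylinder_def)
    then have "(sig_ext j @ wit j, flip (sig_ext j) (flipset (events j) \<alpha>) @ wit j) \<in> E"
      using witness(1)[OF ext finite_flipset zero_in_flipset] by (simp add: wit_def)
    from meets_test_insert[OF test ext this] show ?thesis
      using True in_cyl by (simp add: stage_Suc(1) flipset_events_Suc node_def)
  qed
qed

lemma meets_test_stage: "meets_test E (sig j) (flipset (events j) \<alpha>)"
proof (induction j arbitrary: \<alpha>)
  case 0
  have "sE E 0 = []" "tE E 0 = []"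
    using length_sE[OF test, of 0] length_tE[OF test, of 0] by simp_all
  then show ?case
    by (simp add: meets_test_def stage_0)
qed (rule meets_test_stage_Suc)

lemma fst_phi_node:
  assumes "ends_True (enum_bits j)"
  shows "fst_phi (node j - 1) = fst_phi (length (enum_bits j) - 1)"
  using witness(2)[OF meets_test_append[OF test meets_test_stage] finite_flipset zero_in_flipset]
  by (simp add: node_def wit_def sig_ext_def)

definition alpha0 :: "nat \<Rightarrow> bool" where
  "alpha0 i = sig (Suc i) ! i"

lemma alpha0_in_cylinder_sig: "alpha0 \<in> cylinder (sig j)"
  unfolding cylinder_def
proof (intro CollectI allI impI)
  fix i assume "i < length (sig j)"
  moreover have "i < length (sig (Suc i))"
    using less_length_sig[of "Suc i"] by simp
  ultimately show "alpha0 i = sig j ! i"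
    using prefix_nth[OF prefix_sig_mono, of j "max j (Suc i)" i]
      prefix_nth[OF prefix_sig_mono, of "Suc i" "max j (Suc i)" i]
    by (simp add: alpha0_def)
qed

lemma alpha0_in_cylinder_sig_ext: "alpha0 \<in> cylinder (sig_ext j)"
  using alpha0_in_cylinder_sig cylinder_antimono[OF prefix_sig_ext(2)] by blast

definition flips :: "(nat \<Rightarrow> bool) \<Rightarrow> nat set" where
  "flips \<alpha> = insert 0 (node ` {l. ends_True (enum_bits l) \<and> \<alpha> \<in> cylinder (enum_bits l)})"

definition f :: "(nat \<Rightarrow> bool) \<Rightarrow> nat \<Rightarrow> bool" where
  "f \<alpha> = flip_seq alpha0 (flips \<alpha>)"

lemma flips_below_sig_ext:
  assumes "i < length (sig_ext j)"
  shows "i \<in> flips \<alpha> \<longleftrightarrow> i \<in> flipset (events j) \<alpha>"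
proof -
  have "l < j" if "node l = i" for l
  proof (rule ccontr)
    assume "\<not> l < j"
    then have "length (sig_ext j) \<le> node l"
      using length_sig_ext_mono[of j l] length_sig_ext_le_node[of l] by simp
    then show False using that assms by simp
  qed
  then show ?thesis
    unfolding flips_def flipset_events by auto
qed

lemma flip_seq_alpha0_in_U:
  assumes "Q' \<subseteq> {..<length (sig j)}" "\<And>i. i < length (sig_ext j) \<Longrightarrow> i \<in> Q \<longleftrightarrow> i \<in> Q'"
  shows "flip_seq alpha0 Q \<in> U j"
proof -
  have "map (flip_seq alpha0 Q) [0..<length (sig_ext j)] = flip (sig_ext j) Q"
    using alpha0_in_cylinder_sig_ext[of j] by (simp add: map_flip_seq mem_cylinder_iff_map)
  also have "\<dots> = flip (sig_ext j) Q'"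
    using assms(2) by (rule flip_cong)
  also have "\<dots> = flip (sig j) Q' @ dense_ext j (sig j)"
    using assms(1) by (simp add: sig_ext_def flip_append)
  finally have "flip_seq alpha0 Q \<in> cylinder (flip (sig j) Q' @ dense_ext j (sig j))"
    by (simp add: mem_cylinder_iff_map sig_ext_def)
  with dense_ext(2)[OF assms(1)] show ?thesis by blast
qed

lemma alpha0_in_U: "alpha0 \<in> U j"
  using flip_seq_alpha0_in_U[of "{}" j "{}"] by simp

lemma f_in_U: "f \<alpha> \<in> U j"
  unfolding f_def
  by (rule flip_seq_alpha0_in_U[OF meets_test_bound[OF test meets_test_stage] flips_below_sig_ext])

lemma meets_test_seq_alpha0: "meets_test_seq E alpha0 (flips \<alpha>)"
  unfolding meets_test_seq_def
proof
  fix q assume q: "q \<in> flips \<alpha>"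
  have below: "q < length (sig_ext q)"
    using less_length_sig[of q] length_sig_less_sig_ext[of q] by simp
  then have "q \<in> flipset (events q) \<alpha>"
    using q flips_below_sig_ext by blast
  then have node: "take (Suc q) (sig q) = sE E q @ [False]" "flip (sE E q) (flipset (events q) \<alpha>) = tE E q"
    using meets_test_stage[of q \<alpha>] by (simp_all add: meets_test_def)
  have "alpha0 \<in> cylinder (sE E q @ [False])"
    using alpha0_in_cylinder_sig[of q] cylinder_antimono[OF take_is_prefix[of "Suc q" "sig q"]]
    by (auto simp: node(1))
  moreover have "flip (sE E q) (flips \<alpha>) = flip (sE E q) (flipset (events q) \<alpha>)"
    using below flips_below_sig_ext[of _ q] by (intro flip_cong) (simp add: length_sE[OF test])
  ultimately show "alpha0 \<in> cylinder (sE E q @ [False]) \<and> flip (sE E q) (flips \<alpha>) = tE E q"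
    using node(2) by simp
qed

lemma alpha0_f_in_body: "(alpha0, f \<alpha>) \<in> body (tree_of E)"
  unfolding f_def
  by (rule meets_test_seq_body[OF test meets_test_seq_alpha0]) (simp add: flips_def)

lemma continuous_map_f: "continuous_map cantor cantor f"
proof -
  have "continuous_map cantor (discrete_topology UNIV) (\<lambda>\<alpha>. f \<alpha> i)" for i
  proof (rule continuous_map_cantor_discrete_if_finitely_determined)
    fix \<alpha> \<beta> :: "nat \<Rightarrow> bool" assume "\<forall>k<length (enum_bits i). \<alpha> k = \<beta> k"
    then have "flipset (events i) \<alpha> = flipset (events i) \<beta>"
      by (intro flipset_events_cong) simp
    moreover have "i < length (sig_ext i)"
      using less_length_sig[of i] length_sig_less_sig_ext[of i] by simp
    ultimately show "f \<alpha> i = f \<beta> i"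
      using flips_below_sig_ext by (simp add: f_def flip_seq_def)
  qed
  then show ?thesis
    by (simp add: cantor_def continuous_map_componentwise_UNIV)
qed

lemma flips_hit:
  assumes "\<alpha> k"
  obtains q where "q \<in> flips \<alpha>" "0 < q" "fst_phi (q - 1) = fst_phi k"
proof -
  obtain j where j: "enum_bits j = map \<alpha> [0..<Suc k]"
    using enum_bits_surj by blast
  then have "ends_True (enum_bits j)"
    using assms by (simp add: ends_True_def)
  moreover have "\<alpha> \<in> cylinder (enum_bits j)"
    unfolding j by (rule mem_cylinder_map)
  ultimately show thesis
    using that[of "node j"] fst_phi_node[of j] node_gt[of j] j by (auto simp: flips_def)
qed

lemma flips_source:
  assumes "q \<in> flips \<alpha>" "0 < q"
  obtains k where "\<alpha> k" "fst_phi (q - 1) = fst_phi k"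
proof -
  obtain l where "q = node l" "ends_True (enum_bits l)" "\<alpha> \<in> cylinder (enum_bits l)"
    using assms by (auto simp: flips_def)
  then show thesis
    using that ends_True_cylinder fst_phi_node by blast
qed

lemma symdiff_alpha0_f: "symdiff alpha0 (f \<alpha>) i \<longleftrightarrow> i \<in> flips \<alpha>"
  by (simp add: f_def symdiff_flip_seq)

lemma pcode_one_imp_flipped:
  assumes "\<alpha> (pcode (t @ [m]))"
  shows "\<exists>m'. symdiff alpha0 (f \<alpha>) (pcode (t @ [m']) + 1)"
proof -
  obtain q where q: "q \<in> flips \<alpha>" "0 < q" "fst_phi (q - 1) = fst_phi (pcode (t @ [m]))"
    using flips_hit[of \<alpha> "pcode (t @ [m])"] assms by blast
  then obtain m' where "pcode (t @ [m']) = q - 1"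
    using pcode_snoc_fibre by blast
  then have "pcode (t @ [m']) + 1 = q" using q(2) by simp
  then show ?thesis using q(1) by (auto simp: symdiff_alpha0_f)
qed

lemma flipped_imp_pcode_one:
  assumes "symdiff alpha0 (f \<alpha>) (pcode (t @ [m]) + 1)"
  shows "\<exists>m'. \<alpha> (pcode (t @ [m']))"
proof -
  obtain k where k: "\<alpha> k" "fst_phi (pcode (t @ [m])) = fst_phi k"
    using flips_source[of "pcode (t @ [m]) + 1" \<alpha>] assms by (auto simp: symdiff_alpha0_f)
  then obtain m' where "pcode (t @ [m']) = k"
    using pcode_snoc_fibre by metis
  then show ?thesis using k by blast
qed

end

theorem lemma3p4:
  fixes G :: "(nat \<Rightarrow> bool) set" and E :: "(bool list \<times> bool list) set"
  assumes "gdelta_in cantor G" and "cantor closure_of G = topspace cantor"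
    and "is_test E"
  shows "\<exists>\<alpha>0\<in>G. \<exists>f. continuous_map cantor cantor f \<and> (\<forall>\<alpha>. f \<alpha> \<in> G) \<and>
     (\<forall>\<alpha>. (\<alpha>0, f \<alpha>) \<in> body (tree_of E) \<and>
        (\<forall>(t::nat list) (m::nat).
           (\<alpha> (pcode (t @ [m])) \<longrightarrow>
              (\<exists>m'. symdiff \<alpha>0 (f \<alpha>) (pcode (t @ [m']) + 1))) \<and>
           (symdiff \<alpha>0 (f \<alpha>) (pcode (t @ [m]) + 1) \<longrightarrow>
              (\<exists>m'. \<alpha> (pcode (t @ [m']))))))"
proof -
  obtain U where open_U: "\<forall>n. openin cantor (U n)" and "\<forall>n. U (Suc n) \<subseteq> U n"
    and G_eq: "\<Inter> (range U) = G"
    using assms(1) unfolding gdelta_in_descending by blast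
  have "cantor closure_of U n = topspace cantor" for n
  proof (rule antisym)
    have "G \<subseteq> U n" using G_eq by blast
    then show "topspace cantor \<subseteq> cantor closure_of U n"
      using assms(2) closure_of_mono by metis
  qed (rule closure_of_subset_topspace)
  then interpret c: test_construction E U
    using assms(3) open_U by unfold_locales auto
  have "c.alpha0 \<in> G" "c.f \<alpha> \<in> G" for \<alpha>
    using c.alpha0_in_U c.f_in_U G_eq by blast+
  then show ?thesis
    using c.continuous_map_f c.alpha0_f_in_body c.pcode_one_imp_flipped c.flipped_imp_pcode_one
    by blast
qed

end
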